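(* Let $f,g\colon[a,b]\to\mathbb{R}$ be integrable, with $a<b$. If either ($g$ is non-decreasing and $f\in M^+$) or ($g$ is non-increasing and $f\in M^-$), then $$\frac{1}{b-a}\int_a^b f(x)g(x)\,dx\geq \frac{1}{b-a}\int_a^b f(x)\,dx\cdot\frac{1}{b-a}\int_a^b g(x)\,dx.$$ If instead either ($g$ is non-decreasing and $f\in M^-$) or ($g$ is non-increasing and $f\in M^+$), then the reverse inequality $\le$ holds.
   Context: An integrable function $f\colon[a,b]\to\mathbb{R}$ belongs to the class $M^+$ if there is a $c\in[a,b]$ such that: (1) if $f(x)<\frac{1}{b-a}\int_a^b f(t)\,dt$ then $x<c$, and (2) if $f(x)>\frac{1}{b-a}\int_a^b f(t)\,dt$ then $x>c$. It belongs to the class $M^-$ if there is a $c\in[a,b]$ such that: (1) if $f(x)<\frac{1}{b-a}\int_a^b f(t)\,dt$ then $x>c$, and (2) if $f(x)>\frac{1}{b-a}\int_a^b f(t)\,dt$ then $x<c$. *)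

theory Defs
  imports "HOL-Analysis.Analysis"
begin

definition mean_val :: "(real \<Rightarrow> real) \<Rightarrow> real \<Rightarrow> real \<Rightarrow> real" where
  "mean_val f a b = (1 / (b - a)) * integral {a..b} f"

definition M_plus :: "(real \<Rightarrow> real) \<Rightarrow> real \<Rightarrow> real \<Rightarrow> bool" where
  "M_plus f a b \<longleftrightarrow> f integrable_on {a..b} \<and>
     (\<exists>c\<in>{a..b}. \<forall>x\<in>{a..b}.
        (f x < mean_val f a b \<longrightarrow> x < c) \<and> (f x > mean_val f a b \<longrightarrow> x > c))"

definition M_minus :: "(real \<Rightarrow> real) \<Rightarrow> real \<Rightarrow> real \<Rightarrow> bool" where
  "M_minus f a b \<longleftrightarrow> f integrable_on {a..b} \<and>
     (\<exists>c\<in>{a..b}. \<forall>x\<in>{a..b}.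
        (f x < mean_val f a b \<longrightarrow> x > c) \<and> (f x > mean_val f a b \<longrightarrow> x < c))"

end

theory Submission
  imports Defs
begin

text \<open>
  With \<open>m\<close> the mean of \<open>f\<close> and \<open>h = f - m\<close>, membership in \<open>M\<^sup>+\<close> says that \<open>h\<close> changes
  sign only once, from \<open>\<le> 0\<close> to \<open>\<ge> 0\<close>, at some point \<open>c\<close>. For non-decreasing \<open>g\<close> this gives
  \<open>h x * (g x - g c) \<ge> 0\<close> everywhere, and integrating yields
  \<open>\<integral> h g \<ge> g c * \<integral> h = 0\<close>, i.e. \<open>\<integral> f g \<ge> m * \<integral> g\<close>. The single sign change also makes \<open>h\<close>
  absolutely integrable, which is what makes \<open>h g\<close> integrable for the merely bounded
  measurable \<open>g\<close>. The other three cases follow by replacing \<open>f\<close> or \<open>g\<close> by its negative.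
\<close>

lemma absolutely_integrable_neg_iff:
  fixes f :: "'a::euclidean_space \<Rightarrow> real"
  shows "(\<lambda>x. - f x) absolutely_integrable_on S \<longleftrightarrow> f absolutely_integrable_on S"
  by (simp add: absolutely_integrable_on_def integrable_neg_iff)

lemma nonnegative_absolutely_integrable_spike:
  fixes f :: "'a::euclidean_space \<Rightarrow> real"
  assumes f: "f integrable_on S" and N: "negligible N"
    and nonneg: "\<And>x. x \<in> S - N \<Longrightarrow> 0 \<le> f x"
  shows "f absolutely_integrable_on S"
proof -
  define f' where "f' x = (if x \<in> N then 0 else f x)" for x
  have "f' integrable_on S"
    using f N by (rule integrable_spike) (auto simp: f'_def)
  then have "f' absolutely_integrable_on S"
    by (rule nonnegative_absolutely_integrable_1) (use nonneg in \<open>auto simp: f'_def\<close>)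
  then show ?thesis
    using N by (rule absolutely_integrable_spike) (auto simp: f'_def)
qed

lemma absolutely_integrable_single_sign_change:
  fixes h :: "real \<Rightarrow> real"
  assumes h: "h integrable_on {a..b}" and c: "c \<in> {a..b}"
    and left: "\<And>x. x \<in> {a..b} \<Longrightarrow> x < c \<Longrightarrow> h x \<le> 0"
    and right: "\<And>x. x \<in> {a..b} \<Longrightarrow> c < x \<Longrightarrow> 0 \<le> h x"
  shows "h absolutely_integrable_on {a..b}"
proof -
  have "(\<lambda>x. - h x) integrable_on {a..c}"
    using integrable_on_subinterval[OF h] c by (auto intro: integrable_neg)
  then have "(\<lambda>x. - h x) absolutely_integrable_on {a..c}"
    by (rule nonnegative_absolutely_integrable_spike[of _ _ "{c}"]) (use c left in auto)
  then have left_part: "h absolutely_integrable_on {a..c}"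
    by (simp only: absolutely_integrable_neg_iff)
  have "h integrable_on {c..b}"
    using integrable_on_subinterval[OF h] c by auto
  then have right_part: "h absolutely_integrable_on {c..b}"
    by (rule nonnegative_absolutely_integrable_spike[of _ _ "{c}"]) (use c right in auto)
  show ?thesis
    using absolutely_integrable_on_combine[OF left_part right_part] c by auto
qed

lemma integrable_mult_bounded_measurable:
  fixes h g :: "real \<Rightarrow> real"
  assumes "h absolutely_integrable_on S" "S \<in> sets lebesgue"
    and "g \<in> borel_measurable (lebesgue_on S)" "bounded (g ` S)"
  shows "(\<lambda>x. h x * g x) integrable_on S"
proof -
  have "(\<lambda>x. g x * h x) absolutely_integrable_on S"
    using assms by (intro absolutely_integrable_bounded_measurable_product_real)
  then show ?thesis
    by (simp add: absolutely_integrable_on_def mult.commute)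
qed

lemma integral_mult_ge_if_sign_compatible:
  fixes h g :: "real \<Rightarrow> real"
  assumes h: "h absolutely_integrable_on S" and S: "S \<in> sets lebesgue"
    and g: "g \<in> borel_measurable (lebesgue_on S)" "bounded (g ` S)"
    and sign: "\<And>x. x \<in> S \<Longrightarrow> 0 \<le> h x * (g x - t)"
  shows "t * integral S h \<le> integral S (\<lambda>x. h x * g x)"
proof -
  have hg: "(\<lambda>x. h x * g x) integrable_on S"
    using integrable_mult_bounded_measurable[OF h S g] .
  have ht: "(\<lambda>x. h x * t) integrable_on S"
    using h by (intro integrable_on_mult_left) (simp add: absolutely_integrable_on_def)
  have "0 \<le> integral S (\<lambda>x. h x * g x - h x * t)"
    using sign by (intro integral_nonneg integrable_diff hg ht) (simp add: algebra_simps)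
  also have "\<dots> = integral S (\<lambda>x. h x * g x) - t * integral S h"
    using hg ht by (simp add: integral_diff mult.commute)
  finally show ?thesis
    by simp
qed

lemma mean_val_uminus: "mean_val (\<lambda>x. - f x) a b = - mean_val f a b"
  by (simp add: mean_val_def)

lemma M_minus_iff_M_plus_uminus: "M_minus f a b \<longleftrightarrow> M_plus (\<lambda>x. - f x) a b"
  by (auto simp: M_minus_def M_plus_def mean_val_uminus integrable_neg_iff)

lemma mono_on_uminus_iff_antimono_on:
  fixes g :: "'a::order \<Rightarrow> 'b::ordered_ab_group_add"
  shows "mono_on S (\<lambda>x. - g x) \<longleftrightarrow> antimono_on S g"
  by (auto simp: monotone_on_def)

lemma mult_nonneg_if_sign_change_mono_on:
  fixes h g :: "'a::linorder \<Rightarrow> 'b::linordered_ring"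
  assumes "mono_on S g" "c \<in> S" "x \<in> S"
    and "x < c \<Longrightarrow> h x \<le> 0" "c < x \<Longrightarrow> 0 \<le> h x"
  shows "0 \<le> h x * (g x - g c)"
proof (cases x c rule: linorder_cases)
  case less
  then show ?thesis
    using assms by (intro mult_nonpos_nonpos) (auto simp: monotone_on_def)
next
  case greater
  then show ?thesis
    using assms by (intro mult_nonneg_nonneg) (auto simp: monotone_on_def)
qed simp

lemma mean_val_mult_ge_if_mono_on_M_plus:
  fixes f g :: "real \<Rightarrow> real"
  assumes ab: "a < b" and g: "g integrable_on {a..b}" "mono_on {a..b} g"
    and f: "M_plus f a b"
  shows "mean_val f a b * mean_val g a b \<le> mean_val (\<lambda>x. f x * g x) a b"
proof -
  define m where "m = mean_val f a b"
  define h where "h x = f x - m" for x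
  obtain c where c: "c \<in> {a..b}"
    and below: "\<And>x. x \<in> {a..b} \<Longrightarrow> f x < m \<Longrightarrow> x < c"
    and above: "\<And>x. x \<in> {a..b} \<Longrightarrow> m < f x \<Longrightarrow> c < x"
    using f unfolding M_plus_def m_def by blast
  have fi: "f integrable_on {a..b}"
    using f by (simp add: M_plus_def)
  have "h integrable_on {a..b}"
    unfolding h_def using fi by (intro integrable_diff) auto
  moreover have h_left: "h x \<le> 0" if "x \<in> {a..b}" "x < c" for x
    using above[OF that(1)] that(2) by (force simp: h_def)
  moreover have h_right: "0 \<le> h x" if "x \<in> {a..b}" "c < x" for x
    using below[OF that(1)] that(2) by (force simp: h_def)
  ultimately have h_abs: "h absolutely_integrable_on {a..b}"
    using absolutely_integrable_single_sign_change c by blast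
  have "integral {a..b} h = integral {a..b} f - integral {a..b} (\<lambda>x. m)"
    unfolding h_def using fi by (intro integral_diff) auto
  then have h_mean: "integral {a..b} h = 0"
    using ab by (simp add: m_def mean_val_def)
  have g_bounded: "bounded (g ` {a..b})"
    by (rule bounded_subset[OF bounded_closed_interval, of _ "g a" "g b"])
      (use g(2) in \<open>auto simp: monotone_on_def\<close>)
  have g_meas: "g \<in> borel_measurable (lebesgue_on {a..b})"
    using g(1) by (rule integrable_imp_measurable)
  have "0 \<le> h x * (g x - g c)" if "x \<in> {a..b}" for x
    using that c g(2) h_left h_right
    by (intro mult_nonneg_if_sign_change_mono_on) auto
  then have hg_nonneg: "0 \<le> integral {a..b} (\<lambda>x. h x * g x)"
    using integral_mult_ge_if_sign_compatible[OF h_abs _ g_meas g_bounded, of "g c"] h_mean by simp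
  have "integral {a..b} (\<lambda>x. f x * g x) = integral {a..b} (\<lambda>x. h x * g x + m * g x)"
    by (simp add: h_def algebra_simps)
  also have "\<dots> = integral {a..b} (\<lambda>x. h x * g x) + m * integral {a..b} g"
    using integrable_mult_bounded_measurable[OF h_abs _ g_meas g_bounded] g(1)
    by (simp add: integral_add integrable_on_mult_right)
  finally have "m * integral {a..b} g \<le> integral {a..b} (\<lambda>x. f x * g x)"
    using hg_nonneg by simp
  then have "1 / (b - a) * (m * integral {a..b} g) \<le> mean_val (\<lambda>x. f x * g x) a b"
    unfolding mean_val_def using ab by (intro mult_left_mono) auto
  then show ?thesis
    by (simp add: mean_val_def m_def)
qed

theorem theorem4:
  fixes f g :: "real \<Rightarrow> real" and a b :: real
  assumes "a < b"
    and "f integrable_on {a..b}" and "g integrable_on {a..b}"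
  shows "(((mono_on {a..b} g \<and> M_plus f a b) \<or> (antimono_on {a..b} g \<and> M_minus f a b))
           \<longrightarrow> mean_val (\<lambda>x. f x * g x) a b \<ge> mean_val f a b * mean_val g a b) \<and>
         (((mono_on {a..b} g \<and> M_minus f a b) \<or> (antimono_on {a..b} g \<and> M_plus f a b))
           \<longrightarrow> mean_val (\<lambda>x. f x * g x) a b \<le> mean_val f a b * mean_val g a b)"
proof -
  note chebyshev = mean_val_mult_ge_if_mono_on_M_plus[OF \<open>a < b\<close>]
  have neg_g: "(\<lambda>x. - g x) integrable_on {a..b}"
    using assms(3) by (rule integrable_neg)
  have "mean_val f a b * mean_val g a b \<le> mean_val (\<lambda>x. f x * g x) a b"
    if "mono_on {a..b} g \<and> M_plus f a b \<or> antimono_on {a..b} g \<and> M_minus f a b"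
    using that chebyshev[OF assms(3), of f] chebyshev[OF neg_g, of "\<lambda>x. - f x"]
    by (auto simp: M_minus_iff_M_plus_uminus mono_on_uminus_iff_antimono_on mean_val_uminus)
  moreover have "mean_val (\<lambda>x. f x * g x) a b \<le> mean_val f a b * mean_val g a b"
    if "mono_on {a..b} g \<and> M_minus f a b \<or> antimono_on {a..b} g \<and> M_plus f a b"
    using that chebyshev[OF assms(3), of "\<lambda>x. - f x"] chebyshev[OF neg_g, of f]
    by (auto simp: M_minus_iff_M_plus_uminus mono_on_uminus_iff_antimono_on mean_val_uminus)
  ultimately show ?thesis
    by blast
qed

end
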